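(* For $t>1$, let $\sigma_t=\prod_{n=1}^{\infty} n^{1/t^n}$. Then $$\gamma\!\left(\frac1t\right)=t\log\frac{t}{(t-1)\sigma_t^{\,t-1}}.$$ In particular, $$\lim_{t\to 0^+} t\,\sigma_{t+1}^{\,t}=e^{-\gamma},$$ where $\gamma=\gamma(1)$ is Euler's constant.
   Context: $\gamma(z)=\sum_{n=1}^{\infty} z^{n-1}\left(\frac{1}{n}-\log\frac{n+1}{n}\right)$ for $|z|\le1$. The product $\sigma_t=1^{1/t}2^{1/t^2}3^{1/t^3}\cdots$ (the generalized Somos constant) converges for $t>1$. *)

theory Defs
  imports "HOL-Analysis.Analysis"
begin

text \<open>The power series gamma(z) = sum_{n>=1} z^(n-1) (1/n - log((n+1)/n)), for complex z with |z| <= 1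
  (index shifted so that the summation starts at 0).\<close>
definition gamma_ser :: "complex \<Rightarrow> complex" where
  "gamma_ser z = (\<Sum>n. z ^ n * complex_of_real (1 / real (n + 1) - ln (real (n + 2) / real (n + 1))))"

definition somos :: "real \<Rightarrow> real" where
  "somos t = (\<Prod>n. real (n + 1) powr (1 / t ^ (n + 1)))"

end

theory Submission imports Defs begin

text \<open>Put \<open>x = 1/t\<close> and \<open>L(x) = \<Sum>\<^sub>n x\<^sup>n ln (n+1)\<close>. Taking logarithms in the Somos
  product gives \<open>ln \<sigma>\<^sub>t = x L(x)\<close>. Splitting the coefficient \<open>1/(n+1) - (ln (n+2) - ln (n+1))\<close>
  of \<open>\<gamma>\<close> and shifting the index in the \<open>ln (n+2)\<close> part gives
  \<open>\<gamma>(x) = - ln (1-x)/x - (1/x - 1) L(x)\<close>; eliminating \<open>L(x)\<close> yields the identity.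
  The coefficients of \<open>\<gamma>\<close> are nonnegative and sum to Euler's constant, so \<open>\<gamma>\<close> is continuous
  on \<open>[-1,1]\<close> by the Weierstrass M-test, and the limit follows from the identity written as
  \<open>t \<sigma>\<^bsub>t+1\<^esub>\<^sup>t = (t+1) exp (- \<gamma>(1/(t+1))/(t+1))\<close>.\<close>

definition gamma_coeff :: "nat \<Rightarrow> real" where
  "gamma_coeff n = 1 / real (n + 1) - ln (real (n + 2) / real (n + 1))"

definition gamma_real :: "real \<Rightarrow> real" where
  "gamma_real x = (\<Sum>n. x ^ n * gamma_coeff n)"

definition ln_succ_series :: "real \<Rightarrow> real" where
  "ln_succ_series x = (\<Sum>n. x ^ n * ln (real (n + 1)))"

lemma gamma_coeff_eq: "gamma_coeff n = 1 / real (n + 1) - (ln (real (n + 2)) - ln (real (n + 1)))"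
  unfolding gamma_coeff_def by (subst ln_div) auto

lemma gamma_coeff_nonneg: "gamma_coeff n \<ge> 0"
proof -
  have "real (n + 2) / real (n + 1) = 1 + 1 / real (n + 1)"
    by (simp add: field_simps)
  then have "ln (real (n + 2) / real (n + 1)) \<le> 1 / real (n + 1)"
    using ln_add_one_self_le_self[of "1 / real (n + 1)"] by simp
  then show ?thesis
    by (simp add: gamma_coeff_def)
qed

lemma gamma_coeff_sums: "gamma_coeff sums euler_mascheroni"
proof -
  have "gamma_coeff = (\<lambda>n. inverse (of_nat (n + 1)) + ln (of_nat (n + 1)) - ln (of_nat (n + 2)))"
    by (simp add: fun_eq_iff gamma_coeff_eq field_simps)
  then show ?thesis
    using euler_mascheroni_sum_real by simp
qed

lemma norm_gamma_series_term_le: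
  assumes "\<bar>x\<bar> \<le> 1"
  shows "norm (x ^ n * gamma_coeff n) \<le> gamma_coeff n"
proof -
  have "\<bar>x\<bar> ^ n \<le> 1"
    using assms by (simp add: power_le_one)
  then show ?thesis
    using gamma_coeff_nonneg[of n] by (simp add: abs_mult power_abs mult_left_le_one_le)
qed

lemma summable_gamma_series:
  assumes "\<bar>x\<bar> \<le> 1"
  shows "summable (\<lambda>n. x ^ n * gamma_coeff n)"
  by (rule summable_comparison_test'[OF sums_summable[OF gamma_coeff_sums]])
    (rule norm_gamma_series_term_le[OF assms])

lemma gamma_ser_of_real:
  assumes "\<bar>x\<bar> \<le> 1"
  shows "gamma_ser (complex_of_real x) = complex_of_real (gamma_real x)"
proof -
  have "(\<lambda>n. complex_of_real (x ^ n * gamma_coeff n)) sums complex_of_real (gamma_real x)"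
    unfolding sums_of_real_iff gamma_real_def using summable_gamma_series[OF assms] by (rule summable_sums)
  moreover have "(\<lambda>n. complex_of_real (x ^ n * gamma_coeff n)) = (\<lambda>n. complex_of_real x ^ n *
      complex_of_real (1 / real (n + 1) - ln (real (n + 2) / real (n + 1))))"
    by (simp add: gamma_coeff_def)
  ultimately show ?thesis
    unfolding gamma_ser_def by (simp add: sums_iff)
qed

lemma gamma_real_1: "gamma_real 1 = euler_mascheroni"
  unfolding gamma_real_def using gamma_coeff_sums by (simp add: sums_iff)

lemma continuous_on_gamma_real: "continuous_on {-1..1} gamma_real"
proof -
  have "uniform_limit {-1..1} (\<lambda>n x. \<Sum>i<n. x ^ i * gamma_coeff i) gamma_real sequentially"
    unfolding gamma_real_def
    by (rule Weierstrass_m_test[OF _ sums_summable[OF gamma_coeff_sums]])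
      (rule norm_gamma_series_term_le, auto)
  then show ?thesis
    by (rule uniform_limit_theorem[rotated]) (auto intro!: always_eventually continuous_intros)
qed

lemma summable_ln_succ_series:
  assumes "\<bar>x\<bar> < 1"
  shows "summable (\<lambda>n. x ^ n * ln (real (n + 1)))"
proof (rule summable_comparison_test)
  have "summable (\<lambda>n. diffs (\<lambda>_. 1) n * \<bar>x\<bar> ^ n)"
    by (rule termdiff_converges[where K = 1]) (use assms in \<open>auto intro!: summable_geometric\<close>)
  then show "summable (\<lambda>n. real (n + 1) * \<bar>x\<bar> ^ n)"
    by (simp add: diffs_def)
  show "\<exists>N. \<forall>n\<ge>N. norm (x ^ n * ln (real (n + 1))) \<le> real (n + 1) * \<bar>x\<bar> ^ n"
  proof (intro exI allI impI)
    fix n :: nat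
    have "ln (real (n + 1)) \<le> real (n + 1)"
      by (rule ln_le_minus_one[THEN order_trans]) auto
    from mult_left_mono[OF this, of "\<bar>x\<bar> ^ n"]
    show "norm (x ^ n * ln (real (n + 1))) \<le> real (n + 1) * \<bar>x\<bar> ^ n"
      by (simp add: abs_mult power_abs mult.commute)
  qed
qed

lemma sums_power_div_Suc:
  fixes x :: real
  assumes "x \<noteq> 0" "\<bar>x\<bar> < 1"
  shows "(\<lambda>n. x ^ n / real (n + 1)) sums (- ln (1 - x) / x)"
proof -
  have "(\<lambda>n. - (x ^ n) / of_nat n) sums ln (1 - x)"
    using ln_series'[of "- x"] assms by simp
  then have "(\<lambda>n. - (x ^ Suc n) / of_nat (Suc n)) sums ln (1 - x)"
    by (subst sums_Suc_iff) simp
  then have "(\<lambda>n. - (x ^ Suc n) / of_nat (Suc n) / (- x)) sums (ln (1 - x) / (- x))"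
    by (rule sums_divide)
  moreover have "(\<lambda>n. - (x ^ Suc n) / of_nat (Suc n) / (- x)) = (\<lambda>n. x ^ n / real (n + 1))"
    using assms(1) by (simp add: fun_eq_iff)
  ultimately show ?thesis
    by simp
qed

lemma gamma_real_eq_ln_succ_series:
  assumes "x \<noteq> 0" "\<bar>x\<bar> < 1"
  shows "gamma_real x = - ln (1 - x) / x - (1 / x - 1) * ln_succ_series x"
proof -
  have L: "(\<lambda>n. x ^ n * ln (real (n + 1))) sums ln_succ_series x"
    unfolding ln_succ_series_def using summable_ln_succ_series[OF assms(2)] by (rule summable_sums)
  then have "(\<lambda>n. x ^ Suc n * ln (real (Suc n + 1))) sums ln_succ_series x"
    by (subst sums_Suc_iff) simp
  then have "(\<lambda>n. x ^ Suc n * ln (real (Suc n + 1)) / x) sums (ln_succ_series x / x)"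
    by (rule sums_divide)
  then have L_shift: "(\<lambda>n. x ^ n * ln (real (n + 2))) sums (ln_succ_series x / x)"
    using assms(1) by (simp add: field_simps)
  have "(\<lambda>n. x ^ n / real (n + 1) - (x ^ n * ln (real (n + 2)) - x ^ n * ln (real (n + 1))))
          sums (- ln (1 - x) / x - (ln_succ_series x / x - ln_succ_series x))"
    by (intro sums_diff sums_power_div_Suc L L_shift assms)
  then have "(\<lambda>n. x ^ n * gamma_coeff n)
          sums (- ln (1 - x) / x - (1 / x - 1) * ln_succ_series x)"
    by (simp add: gamma_coeff_eq field_simps)
  then show ?thesis
    unfolding gamma_real_def by (rule sums_unique[symmetric])
qed

lemma somos_eq_exp:
  assumes "t > 1"
  shows "somos t = exp (ln_succ_series (1 / t) / t)"
proof -
  define x where "x = 1 / t"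
  have "\<bar>x\<bar> < 1"
    using assms by (simp add: x_def)
  then have "(\<lambda>n. x * (x ^ n * ln (real (n + 1)))) sums (x * ln_succ_series x)"
    unfolding ln_succ_series_def by (intro sums_mult summable_sums summable_ln_succ_series)
  then have "raw_has_prod (\<lambda>n. exp (x * (x ^ n * ln (real (n + 1))))) 0 (exp (x * ln_succ_series x))"
    by (rule sums_imp_has_prod_exp)
  moreover have "(\<lambda>n. exp (x * (x ^ n * ln (real (n + 1))))) = (\<lambda>n. real (n + 1) powr (1 / t ^ (n + 1)))"
    by (simp add: fun_eq_iff powr_def x_def power_divide field_simps)
  ultimately have "(\<lambda>n. real (n + 1) powr (1 / t ^ (n + 1))) has_prod exp (x * ln_succ_series x)"
    by (auto simp: has_prod_def)
  then have "somos t = exp (x * ln_succ_series x)"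
    unfolding somos_def by (rule has_prod_unique[symmetric])
  then show ?thesis
    by (simp add: x_def)
qed

lemma gamma_real_inverse_eq_somos:
  assumes t: "t > 1"
  shows "gamma_real (1 / t) = t * ln (t / ((t - 1) * somos t powr (t - 1)))"
proof -
  define L where "L = ln_succ_series (1 / t)"
  have "1 - 1 / t = (t - 1) / t"
    using t by (simp add: field_simps)
  then have ln_one_minus: "ln (1 - 1 / t) = ln (t - 1) - ln t"
    using t by (simp add: ln_div)
  have "gamma_real (1 / t) = - ln (1 - 1 / t) * t - (t - 1) * L"
    using t by (simp add: gamma_real_eq_ln_succ_series L_def)
  also have "\<dots> = t * (ln t - ln (t - 1) - (t - 1) * (L / t))"
    unfolding ln_one_minus using t by (simp add: field_simps)
  also have "\<dots> = t * ln (t / ((t - 1) * somos t powr (t - 1)))"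
    using t by (simp add: somos_eq_exp L_def powr_def ln_div ln_mult)
  finally show ?thesis .
qed

lemma somos_succ_powr_eq:
  assumes t: "t > 0"
  shows "t * somos (t + 1) powr t = (t + 1) * exp (- gamma_real (1 / (t + 1)) / (t + 1))"
proof -
  define P where "P = somos (t + 1) powr t"
  have "P > 0"
    using t by (simp add: P_def somos_eq_exp)
  have "gamma_real (1 / (t + 1)) / (t + 1) = ln ((t + 1) / (t * P))"
    using gamma_real_inverse_eq_somos[of "t + 1"] t by (simp add: P_def)
  then have "exp (gamma_real (1 / (t + 1)) / (t + 1)) = (t + 1) / (t * P)"
    using \<open>P > 0\<close> t by simp
  then show ?thesis
    using \<open>P > 0\<close> t by (simp add: P_def exp_minus field_simps)
qed

lemma tendsto_somos_succ_powr:
  "((\<lambda>t. t * somos (t + 1) powr t) \<longlongrightarrow> exp (- euler_mascheroni)) (at_right 0)"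
proof -
  have pos: "\<forall>\<^sub>F t in at_right 0. t > (0::real)"
    by (rule eventually_at_right_less)
  have "((\<lambda>t::real. 1 / (t + 1)) \<longlongrightarrow> 1) (at_right 0)"
    by (rule tendsto_eq_intros) (auto intro!: tendsto_eq_intros)
  moreover have "\<forall>\<^sub>F t in at_right 0. 1 / (t + 1) \<in> {-1..1::real}"
    using pos by eventually_elim (auto simp: divide_simps)
  ultimately have "((\<lambda>t. gamma_real (1 / (t + 1))) \<longlongrightarrow> gamma_real 1) (at_right 0)"
    by (intro continuous_on_tendsto_compose[OF continuous_on_gamma_real]) auto
  then have "((\<lambda>t. (t + 1) * exp (- gamma_real (1 / (t + 1)) / (t + 1)))
              \<longlongrightarrow> exp (- euler_mascheroni)) (at_right 0)"
    by (auto intro!: tendsto_eq_intros simp: gamma_real_1)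
  then show ?thesis
    by (rule Lim_transform_eventually) (use pos in \<open>eventually_elim, simp add: somos_succ_powr_eq\<close>)
qed

theorem theorem18:
  shows "(\<forall>t::real. t > 1 \<longrightarrow>
           gamma_ser (complex_of_real (1 / t)) =
           complex_of_real (t * ln (t / ((t - 1) * somos t powr (t - 1)))))
         \<and> ((\<lambda>t. t * somos (t + 1) powr t) \<longlongrightarrow> exp (- euler_mascheroni)) (at_right 0)"
proof (intro conjI allI impI tendsto_somos_succ_powr)
  fix t :: real
  assume "t > 1"
  then have "\<bar>1 / t\<bar> \<le> 1"
    by simp
  then show "gamma_ser (complex_of_real (1 / t)) =
      complex_of_real (t * ln (t / ((t - 1) * somos t powr (t - 1))))"
    by (simp only: gamma_ser_of_real gamma_real_inverse_eq_somos[OF \<open>t > 1\<close>])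
qed

end
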